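(* Let $\mu$ be a nontrivial probability measure on $\partial\mathbb{D}$ with $1\in\sigma_{\mathrm{ess}}(\mu)$, and for $t\ge0$ let $d\mu_t(\theta)=e^{2t\cos\theta}d\mu(\theta)/\int e^{2t\cos\theta}d\mu(\theta)$. Let $z_1^{(n)}(t),\dots,z_n^{(n)}(t)$ be the zeros of $\Phi_n(z;\mu_t)$. Then for all $n\ge1$ and $j=1,\dots,n$, $z_j^{(n)}(t)\to1$ as $t\to\infty$, and for all $n\ge0$, $\alpha_n(\mu_t)\to(-1)^n$ as $t\to\infty$.
   Context: Points of $\partial\mathbb{D}$ are written $e^{i\theta}$. A measure is nontrivial if its support is infinite. $\sigma_{\mathrm{ess}}(\mu)$ is the set of non-isolated points of $\mathrm{supp}\,\mu$. $\Phi_n(z;\nu)$ is the monic orthogonal polynomial of degree $n$ in $L^2(\nu)$, and $\alpha_n(\nu)=-\overline{\Phi_{n+1}(0;\nu)}$ are the Verblunsky coefficients (so that $\Phi_{n+1}(z)=z\Phi_n(z)-\overline{\alpha_n}z^n\overline{\Phi_n(1/\bar z)}$). The functions $\alpha_n(t)=\alpha_n(\mu_t)$ solve the Schur flow $\alpha_n'=(1-|\alpha_n|^2)(\alpha_{n+1}-\alpha_{n-1})$, $\alpha_{-1}\equiv-1$. *)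

theory Defs
  imports "HOL-Probability.Probability" "HOL-Computational_Algebra.Polynomial"
begin

text \<open>Measures on the unit circle are represented as Borel measures on the complex
plane that give no mass to the complement of the unit circle.\<close>

definition msupp :: "complex measure \<Rightarrow> complex set" where
  "msupp \<mu> = {z. \<forall>e>0. emeasure \<mu> (ball z e) \<noteq> 0}"

definition ess_supp :: "complex measure \<Rightarrow> complex set" where
  "ess_supp \<mu> = {z \<in> msupp \<mu>. z islimpt msupp \<mu>}"

definition nontrivial_measure :: "complex measure \<Rightarrow> bool" where
  "nontrivial_measure \<mu> \<longleftrightarrow> infinite (msupp \<mu>)"

text \<open>The deformed measure d mu_t = e^{2 t cos theta} d mu / normalisation; on the
circle z = e^{i theta}, cos theta = Re z.\<close>
definition mu_t :: "complex measure \<Rightarrow> real \<Rightarrow> complex measure" where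
  "mu_t \<mu> t = density \<mu> (\<lambda>z. ennreal (exp (2 * t * Re z) /
       (\<integral>w. exp (2 * t * Re w) \<partial>\<mu>)))"

definition OPUC :: "complex measure \<Rightarrow> nat \<Rightarrow> complex poly" where
  "OPUC \<nu> n = (THE p. degree p = n \<and> lead_coeff p = 1 \<and>
      (\<forall>k<n. (\<integral>z. poly p z * cnj (z ^ k) \<partial>\<nu>) = 0))"

definition verblunsky :: "complex measure \<Rightarrow> nat \<Rightarrow> complex" where
  "verblunsky \<nu> n = - cnj (poly (OPUC \<nu> (Suc n)) 0)"

end

theory Submission
  imports Defs "HOL-Computational_Algebra.Fundamental_Theorem_Algebra"
begin

(* For fixed t, Phi_n( . ; mu_t) is the monic orthogonal polynomial of degree n for the weight
   w_t(z) = e^(2t Re z) / Z_t on mu. If Phi_n(z0) = 0, write Phi_n = (z - z0) q with deg q < n;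
   orthogonality of Phi_n to q says that z0 ||q||^2 = <z q, q>, hence
   |z0 - 1| ||q||^2 <= integral of w_t |z - 1| |q|^2.
   As t grows, w_t concentrates at 1: outside the delta-neighbourhood of 1 it is exponentially
   smaller than on the smaller disc B(1, rho). Since 1 is a non-isolated point of supp mu, the
   L^2(mu) norm over B(1, rho) dominates the sup norm on the circle of polynomials of degree < n,
   so the right-hand side is eventually below 2 delta ||q||^2, uniformly in q. Thus all zeros
   tend to 1, and alpha_n = - conj Phi_{n+1}(0) with Phi_{n+1}(0) the product of the -z_j. *)

lemma bounded_on_unit_circle:
  fixes f :: "complex \<Rightarrow> 'a::real_normed_vector"
  assumes "continuous_on UNIV f"
  shows "\<exists>K. \<forall>z\<in>sphere 0 1. norm (f z) \<le> K"
proof -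
  have "compact (f ` sphere 0 1)"
    by (intro compact_continuous_image continuous_on_subset[OF assms]) auto
  then show ?thesis by (auto dest!: compact_imp_bounded simp: bounded_iff)
qed

lemma Re_eq_on_unit_circle:
  assumes "cmod z = 1"
  shows "Re z = 1 - (cmod (z - 1))\<^sup>2 / 2"
proof -
  have "(Re z)\<^sup>2 + (Im z)\<^sup>2 = 1" using assms by (simp add: cmod_power2[symmetric])
  moreover have "(cmod (z - 1))\<^sup>2 = (Re z - 1)\<^sup>2 + (Im z)\<^sup>2" by (simp add: cmod_power2)
  ultimately show ?thesis by (simp add: power2_eq_square algebra_simps)
qed

lemma monic_monom_diff:
  fixes s :: "'a::comm_ring_1 poly"
  assumes "s = 0 \<or> degree s < n"
  shows "degree (monom 1 n - s) = n \<and> lead_coeff (monom 1 n - s) = 1"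
proof (cases "s = 0")
  case False
  then have "degree s < n" using assms by auto
  then have "degree (monom 1 n - s) = n"
    using degree_add_eq_left[of "- s" "monom 1 n"] by (simp add: degree_monom_eq)
  moreover have "coeff (monom 1 n - s) n = 1" using \<open>degree s < n\<close> by (simp add: coeff_eq_0)
  ultimately show ?thesis by simp
qed (simp add: degree_monom_eq)

lemma degree_diff_smult_monic_less:
  fixes q P :: "'a::comm_ring_1 poly"
  assumes "degree q \<le> n" "degree P = n" "lead_coeff P = 1"
  shows "q - smult (coeff q n) P = 0 \<or> degree (q - smult (coeff q n) P) < n"
proof -
  have "degree (q - smult (coeff q n) P) \<le> n"
    using assms degree_smult_le[of "coeff q n" P] by (intro degree_diff_le) auto
  moreover have "coeff (q - smult (coeff q n) P) n = 0" using assms by simp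
  ultimately show ?thesis by (metis le_neq_implies_less leading_coeff_0_iff)
qed

lemma norm_poly_0_minus_neg_one_pow_le:
  fixes p :: "complex poly"
  assumes "degree p = N" "lead_coeff p = 1" "\<epsilon> \<le> 1"
    and "\<And>z. poly p z = 0 \<Longrightarrow> cmod (z - 1) < \<epsilon>"
  shows "cmod (poly p 0 - (-1) ^ N) \<le> \<epsilon> * N * 2 ^ N"
  using assms
proof (induction N arbitrary: p)
  case 0
  then show ?case by (simp add: poly_0_coeff_0)
next
  case (Suc N)
  have "\<not> constant (poly p)" using Suc.prems(1) by (simp add: constant_degree)
  then obtain z0 where z0: "poly p z0 = 0" using fundamental_theorem_of_algebra by blast
  then obtain q where p_eq: "p = [:-z0, 1:] * q" using poly_eq_0_iff_dvd by (metis dvdE)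
  have "q \<noteq> 0" using Suc.prems(2) p_eq by auto
  then have "degree q = N" using Suc.prems(1) p_eq degree_mult_eq[of "[:-z0, 1:]" q] by simp
  moreover have "lead_coeff q = 1" using Suc.prems(2) unfolding p_eq lead_coeff_mult by simp
  ultimately have IH: "cmod (poly q 0 - (-1) ^ N) \<le> \<epsilon> * N * 2 ^ N"
    using Suc.IH Suc.prems(3,4) p_eq by simp
  have z0_near: "cmod (z0 - 1) < \<epsilon>" using Suc.prems(4) z0 by blast
  then have "\<epsilon> > 0" by (meson le_less_trans norm_ge_zero)
  have "cmod z0 \<le> 1 + \<epsilon>" using z0_near norm_triangle_ineq2[of z0 1] by simp
  have "poly p 0 - (-1) ^ Suc N = - (z0 * (poly q 0 - (-1) ^ N) + (z0 - 1) * (-1) ^ N)"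
    by (simp add: p_eq algebra_simps)
  then have "cmod (poly p 0 - (-1) ^ Suc N)
      \<le> cmod (z0 * (poly q 0 - (-1) ^ N)) + cmod ((z0 - 1) * (-1) ^ N)"
    by (metis norm_minus_cancel norm_triangle_ineq)
  then have "cmod (poly p 0 - (-1) ^ Suc N) \<le> cmod z0 * cmod (poly q 0 - (-1) ^ N) + cmod (z0 - 1)"
    by (simp add: norm_mult norm_power)
  also have "\<dots> \<le> (1 + \<epsilon>) * (\<epsilon> * N * 2 ^ N) + \<epsilon>"
    using IH \<open>cmod z0 \<le> 1 + \<epsilon>\<close> z0_near \<open>\<epsilon> > 0\<close> by (intro add_mono mult_mono) auto
  also have "\<dots> \<le> 2 * (\<epsilon> * N * 2 ^ N) + \<epsilon> * 2 ^ Suc N"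
  proof (rule add_mono)
    show "(1 + \<epsilon>) * (\<epsilon> * N * 2 ^ N) \<le> 2 * (\<epsilon> * N * 2 ^ N)"
      using Suc.prems(3) \<open>\<epsilon> > 0\<close> by (intro mult_right_mono) auto
    show "\<epsilon> \<le> \<epsilon> * 2 ^ Suc N"
      using \<open>\<epsilon> > 0\<close> one_le_power[of "2::real" "Suc N"] by simp
  qed
  also have "\<dots> = \<epsilon> * Suc N * 2 ^ Suc N" by (simp add: algebra_simps)
  finally show ?case .
qed

lemma tendsto_poly_0_neg_one_pow:
  fixes p :: "'a \<Rightarrow> complex poly"
  assumes "\<And>x. degree (p x) = N" "\<And>x. lead_coeff (p x) = 1"
    and "\<And>e. e > 0 \<Longrightarrow> \<forall>\<^sub>F x in F. \<forall>z. poly (p x) z = 0 \<longrightarrow> cmod (z - 1) < e"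
  shows "((\<lambda>x. poly (p x) 0) \<longlongrightarrow> (-1) ^ N) F"
proof (rule tendstoI)
  fix e :: real assume "e > 0"
  define \<epsilon> where "\<epsilon> = min 1 (e / (N * 2 ^ N + 1))"
  have "real N * 2 ^ N + 1 > 0" by (simp add: add_nonneg_pos)
  then have "\<epsilon> > 0" "\<epsilon> \<le> 1" using \<open>e > 0\<close> by (auto simp: \<epsilon>_def)
  have "\<epsilon> \<le> e / (N * 2 ^ N + 1)" by (simp add: \<epsilon>_def)
  then have "\<epsilon> * (N * 2 ^ N + 1) \<le> e"
    using \<open>real N * 2 ^ N + 1 > 0\<close> by (simp add: pos_le_divide_eq)
  then have small: "\<epsilon> * N * 2 ^ N < e" using \<open>\<epsilon> > 0\<close> by (simp add: algebra_simps)
  show "\<forall>\<^sub>F x in F. dist (poly (p x) 0) ((-1) ^ N) < e"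
    using assms(3)[OF \<open>\<epsilon> > 0\<close>]
  proof eventually_elim
    case (elim x)
    then have "cmod (poly (p x) 0 - (-1) ^ N) \<le> \<epsilon> * N * 2 ^ N"
      using assms(1,2) \<open>\<epsilon> \<le> 1\<close> by (intro norm_poly_0_minus_neg_one_pow_le) auto
    then show ?case using small by (simp add: dist_norm)
  qed
qed

lemma poly_eq_0_if_AE_zero_on_infinite_support:
  fixes p :: "complex poly"
  assumes "sets \<mu> = sets borel" "open U" "infinite (msupp \<mu> \<inter> U)"
    and "AE z in \<mu>. z \<in> U \<longrightarrow> poly p z = 0"
  shows "p = 0"
proof (rule ccontr)
  assume "p \<noteq> 0"
  then have "finite {z. poly p z = 0}" by (rule poly_roots_finite)
  then have "infinite (msupp \<mu> \<inter> U - {z. poly p z = 0})"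
    using assms(3) by (rule Diff_infinite_finite)
  then obtain x where x: "x \<in> msupp \<mu>" "x \<in> U - {z. poly p z = 0}"
    using infinite_imp_nonempty by blast
  have "open (U - {z. poly p z = 0})"
    using assms(2) finite_imp_closed[OF \<open>finite {z. poly p z = 0}\<close>] by (rule open_Diff)
  then obtain e where "e > 0" and ball: "ball x e \<subseteq> U - {z. poly p z = 0}"
    using x(2) open_contains_ball by blast
  from assms(4) have "AE z in \<mu>. z \<notin> ball x e" by eventually_elim (use ball in auto)
  then have "emeasure \<mu> {z \<in> space \<mu>. z \<in> ball x e} = 0" by (rule emeasure_eq_0_AE)
  moreover have "{z \<in> space \<mu>. z \<in> ball x e} = ball x e"
    using sets_eq_imp_space_eq[OF assms(1)] by auto
  ultimately have "emeasure \<mu> (ball x e) = 0" by (simp only:)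
  then show False using x(1) \<open>e > 0\<close> unfolding msupp_def by blast
qed

locale finite_circle_measure =
  fixes M :: "complex measure"
  assumes finite_measure: "finite_measure M" and sets_M: "sets M = sets borel"
    and AE_unit_circle: "AE z in M. z \<in> sphere 0 1"
begin

lemma integrable_bounded_on_circle:
  fixes f :: "complex \<Rightarrow> 'b::{banach,second_countable_topology}"
  assumes "f \<in> borel_measurable borel" "\<And>z. z \<in> sphere 0 1 \<Longrightarrow> norm (f z) \<le> K"
  shows "integrable M f"
proof -
  interpret finite_measure M by (rule finite_measure)
  show ?thesis
  proof (rule integrable_const_bound[where B = K])
    show "AE x in M. norm (f x) \<le> K" using AE_unit_circle by eventually_elim (rule assms(2))
    show "f \<in> borel_measurable M" using assms(1) measurable_cong_sets[OF sets_M refl] by blast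
  qed
qed

lemma integrable_continuous:
  fixes f :: "complex \<Rightarrow> 'b::{banach,second_countable_topology}"
  assumes "continuous_on UNIV f"
  shows "integrable M f"
  using bounded_on_unit_circle[OF assms]
  by (auto intro: integrable_bounded_on_circle borel_measurable_continuous_onI assms)

end

locale weighted_circle_measure = finite_circle_measure +
  fixes g :: "complex \<Rightarrow> real"
  assumes g_measurable [measurable]: "g \<in> borel_measurable borel"
    and g_nonneg: "\<And>z. 0 \<le> g z"
    and g_bounded: "\<exists>G. \<forall>z\<in>sphere 0 1. g z \<le> G"
begin

definition ip :: "complex poly \<Rightarrow> complex poly \<Rightarrow> complex" where
  "ip p q = (\<integral>z. of_real (g z) * (poly p z * cnj (poly q z)) \<partial>M)"

definition wnorm2 :: "complex poly \<Rightarrow> real" where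
  "wnorm2 p = (\<integral>z. g z * (cmod (poly p z))\<^sup>2 \<partial>M)"

definition orth :: "nat \<Rightarrow> complex poly \<Rightarrow> bool" where
  "orth n p \<longleftrightarrow> (\<forall>k<n. ip p (monom 1 k) = 0)"

lemma integrable_weighted:
  fixes f :: "complex \<Rightarrow> 'b::{banach,second_countable_topology}"
  assumes "continuous_on UNIV f"
  shows "integrable M (\<lambda>z. g z *\<^sub>R f z)"
proof -
  obtain K where K: "\<And>z. z \<in> sphere 0 1 \<Longrightarrow> norm (f z) \<le> K"
    using bounded_on_unit_circle[OF assms] by blast
  obtain G where G: "\<And>z. z \<in> sphere 0 1 \<Longrightarrow> g z \<le> G" using g_bounded by blast
  show ?thesis
  proof (rule integrable_bounded_on_circle[where K = "G * K"])
    show "(\<lambda>z. g z *\<^sub>R f z) \<in> borel_measurable borel"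
      using borel_measurable_continuous_onI[OF assms] by measurable
    fix z :: complex assume "z \<in> sphere 0 1"
    then have "g z \<le> G" "norm (f z) \<le> K" using G K by auto
    then show "norm (g z *\<^sub>R f z) \<le> G * K"
      using mult_mono'[OF _ _ g_nonneg norm_ge_zero] g_nonneg[of z] by simp
  qed
qed

lemma integrable_ip: "integrable M (\<lambda>z. of_real (g z) * (poly p z * cnj (poly q z)))"
  using integrable_weighted[of "\<lambda>z. poly p z * cnj (poly q z)"]
  by (simp add: scaleR_conv_of_real continuous_intros)

lemma integrable_wnorm2: "integrable M (\<lambda>z. g z * (cmod (poly p z))\<^sup>2)"
  using integrable_weighted[of "\<lambda>z. (cmod (poly p z))\<^sup>2"] by (simp add: continuous_intros)

lemma ip_add_left: "ip (p + q) r = ip p r + ip q r"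
  unfolding ip_def
  by (subst Bochner_Integration.integral_add[OF integrable_ip integrable_ip, symmetric])
    (simp add: algebra_simps)

lemma ip_diff_left: "ip (p - q) r = ip p r - ip q r"
  unfolding ip_def
  by (subst Bochner_Integration.integral_diff[OF integrable_ip integrable_ip, symmetric])
    (simp add: algebra_simps)

lemma ip_smult_left: "ip (smult c p) r = c * ip p r"
  unfolding ip_def by (subst integral_mult_right_zero[symmetric]) (simp add: algebra_simps)

lemma ip_cnj: "cnj (ip p q) = ip q p"
proof -
  have "(\<lambda>z. of_real (g z) * (poly q z * cnj (poly p z)))
      = (\<lambda>z. cnj (of_real (g z) * (poly p z * cnj (poly q z))))"
    by (simp add: mult_ac fun_eq_iff)
  then show ?thesis unfolding ip_def by (simp only: Bochner_Integration.integral_cnj)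
qed

lemma ip_add_right: "ip r (p + q) = ip r p + ip r q"
  by (metis ip_add_left ip_cnj complex_cnj_add)

lemma ip_smult_right: "ip r (smult c p) = cnj c * ip r p"
  by (metis ip_smult_left ip_cnj complex_cnj_mult)

lemma ip_zero_right [simp]: "ip p 0 = 0"
  by (simp add: ip_def)

lemma ip_sum_right: "ip p (\<Sum>a\<in>A. f a) = (\<Sum>a\<in>A. ip p (f a))"
  by (induction A rule: infinite_finite_induct) (simp_all add: ip_add_right)

lemma ip_self: "ip p p = of_real (wnorm2 p)"
  unfolding ip_def wnorm2_def integral_complex_of_real[symmetric]
  by (simp add: complex_norm_square[symmetric])

lemma wnorm2_0 [simp]: "wnorm2 0 = 0"
  by (simp add: wnorm2_def)

lemma wnorm2_nonneg: "wnorm2 p \<ge> 0"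
  unfolding wnorm2_def by (intro integral_nonneg_AE AE_I2) (simp add: g_nonneg)

lemma wnorm2_smult: "wnorm2 (smult c p) = (cmod c)\<^sup>2 * wnorm2 p"
  unfolding wnorm2_def
  by (subst integral_mult_right_zero[symmetric]) (simp add: norm_mult power_mult_distrib mult_ac)

lemma wnorm2_add_orth:
  assumes "ip p q = 0"
  shows "wnorm2 (p + q) = wnorm2 p + wnorm2 q"
proof -
  have "ip q p = 0" using ip_cnj[of p q] assms by simp
  then have "of_real (wnorm2 (p + q)) = ip p p + ip q q"
    using assms by (simp add: ip_self[symmetric] ip_add_left ip_add_right)
  then show ?thesis by (metis ip_self of_real_add of_real_eq_iff)
qed

lemma orth_ip_eq_0:
  assumes "orth n p" "q = 0 \<or> degree q < n"
  shows "ip p q = 0"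
proof -
  have "ip p q = ip p (\<Sum>i\<le>degree q. smult (coeff q i) (monom 1 i))"
    by (simp add: poly_as_sum_of_monoms smult_monom)
  also have "\<dots> = 0"
    using assms unfolding orth_def ip_sum_right ip_smult_right
    by (intro sum.neutral) (auto simp: ip_def)
  finally show ?thesis .
qed

lemma orth_decomposition:
  assumes "degree P = m" "lead_coeff P = 1" "orth m P" "degree q \<le> m"
  obtains b r where "q = smult b P + r" "r = 0 \<or> degree r < m"
    "wnorm2 q = (cmod b)\<^sup>2 * wnorm2 P + wnorm2 r"
proof -
  define b where "b = coeff q m"
  define r where "r = q - smult b P"
  have q_eq: "q = smult b P + r" by (simp add: r_def)
  have r: "r = 0 \<or> degree r < m"
    unfolding r_def b_def using assms by (intro degree_diff_smult_monic_less) auto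
  have "ip (smult b P) r = 0" using orth_ip_eq_0[OF assms(3) r] by (simp add: ip_smult_left)
  then have "wnorm2 q = (cmod b)\<^sup>2 * wnorm2 P + wnorm2 r"
    unfolding q_eq by (simp add: wnorm2_add_orth wnorm2_smult)
  with q_eq r show ?thesis by (rule that)
qed

text \<open>A zero of an orthogonal polynomial is a Rayleigh quotient of multiplication by z.\<close>

lemma orth_root_dist_le:
  assumes "orth n ([:-z0, 1:] * q)" "degree q < n"
  shows "cmod (z0 - c) * wnorm2 q \<le> (\<integral>z. g z * (cmod (z - c) * (cmod (poly q z))\<^sup>2) \<partial>M)"
proof -
  define G where "G z = g z * (cmod (poly q z))\<^sup>2" for z
  have int: "integrable M (\<lambda>z. (z - a) * of_real (G z))" for a
    using integrable_weighted[of "\<lambda>z. (z - a) * of_real ((cmod (poly q z))\<^sup>2)"]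
    by (simp add: G_def scaleR_conv_of_real continuous_intros mult_ac)
  have "(\<integral>z. (z - z0) * of_real (G z) \<partial>M) = ip ([:-z0, 1:] * q) q"
    unfolding ip_def
  proof (intro Bochner_Integration.integral_cong refl)
    fix z
    have "of_real ((cmod (poly q z))\<^sup>2) = poly q z * cnj (poly q z)" by (rule complex_norm_square)
    then show "(z - z0) * of_real (G z) = of_real (g z) * (poly ([:-z0, 1:] * q) z * cnj (poly q z))"
      unfolding G_def of_real_mult by (simp add: algebra_simps)
  qed
  also have "\<dots> = 0" using orth_ip_eq_0[OF assms(1)] assms(2) by simp
  finally have orth_q: "(\<integral>z. (z - z0) * of_real (G z) \<partial>M) = 0" .
  have "(z0 - c) * of_real (wnorm2 q) = (\<integral>z. (z0 - c) * of_real (G z) \<partial>M)"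
    unfolding wnorm2_def G_def[symmetric] integral_complex_of_real[symmetric]
    by (rule integral_mult_right_zero[symmetric])
  also have "\<dots> = (\<integral>z. (z - c) * of_real (G z) - (z - z0) * of_real (G z) \<partial>M)"
    by (rule Bochner_Integration.integral_cong) (auto simp: algebra_simps)
  also have "\<dots> = (\<integral>z. (z - c) * of_real (G z) \<partial>M)"
    using orth_q by (simp add: Bochner_Integration.integral_diff[OF int int])
  finally have rayleigh: "(z0 - c) * of_real (wnorm2 q) = (\<integral>z. (z - c) * of_real (G z) \<partial>M)" .
  have "cmod (z0 - c) * wnorm2 q = cmod ((z0 - c) * of_real (wnorm2 q))"
    using wnorm2_nonneg[of q] by (simp add: norm_mult)
  also have "\<dots> \<le> (\<integral>z. norm ((z - c) * of_real (G z)) \<partial>M)"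
    unfolding rayleigh by (rule integral_norm_bound)
  also have "\<dots> = (\<integral>z. g z * (cmod (z - c) * (cmod (poly q z))\<^sup>2) \<partial>M)"
  proof (rule Bochner_Integration.integral_cong)
    fix z
    have "G z \<ge> 0" by (simp add: G_def g_nonneg)
    then have "norm ((z - c) * of_real (G z)) = cmod (z - c) * G z" by (simp add: norm_mult)
    then show "norm ((z - c) * of_real (G z)) = g z * (cmod (z - c) * (cmod (poly q z))\<^sup>2)"
      by (simp add: G_def mult_ac)
  qed simp
  finally show ?thesis .
qed

end

locale pd_weighted_circle_measure = weighted_circle_measure +
  assumes wnorm2_pos: "p \<noteq> 0 \<Longrightarrow> wnorm2 p > 0"
begin

lemma orth_projection_exists: "\<exists>r. (r = 0 \<or> degree r < n) \<and> orth n (f - r)"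
proof (induction n arbitrary: f)
  case 0
  show ?case by (auto simp: orth_def)
next
  case (Suc n)
  obtain r1 where r1: "r1 = 0 \<or> degree r1 < n" "orth n (f - r1)" using Suc.IH by blast
  obtain s where s: "s = 0 \<or> degree s < n" "orth n (monom 1 n - s)" using Suc.IH by blast
  define P where "P = monom 1 n - s"
  have "degree P = n" "lead_coeff P = 1" using monic_monom_diff[OF s(1)] by (auto simp: P_def)
  then have "wnorm2 P > 0" by (intro wnorm2_pos) auto
  define c where "c = ip (f - r1) P / ip P P"
  define r where "r = r1 + smult c P"
  have "degree r \<le> n"
    using r1(1) \<open>degree P = n\<close> degree_smult_le[of c P] unfolding r_def
    by (intro degree_add_le) auto
  have fr: "f - r = (f - r1) - smult c P" by (simp add: r_def algebra_simps)
  have orth_n: "orth n (f - r)"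
    using r1(2) s(2) unfolding fr orth_def P_def by (simp add: ip_diff_left ip_smult_left)
  have "ip (f - r) P = 0"
    using \<open>wnorm2 P > 0\<close> unfolding fr ip_diff_left ip_smult_left c_def by (simp add: ip_self)
  moreover have "ip (f - r) s = 0" using orth_ip_eq_0[OF orth_n s(1)] .
  ultimately have "ip (f - r) (monom 1 n) = 0"
    by (metis P_def add_0 diff_add_cancel ip_add_right)
  then have "orth (Suc n) (f - r)" using orth_n by (auto simp: orth_def less_Suc_eq)
  then show ?case using \<open>degree r \<le> n\<close> by (intro exI[of _ r]) auto
qed

lemma monic_orth_ex1: "\<exists>!P. degree P = n \<and> lead_coeff P = 1 \<and> orth n P"
proof -
  obtain s where s: "s = 0 \<or> degree s < n" "orth n (monom 1 n - s)"
    using orth_projection_exists by blast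
  define P where "P = monom 1 n - s"
  have P: "degree P = n" "lead_coeff P = 1" "orth n P"
    using monic_monom_diff[OF s(1)] s(2) by (auto simp: P_def)
  show ?thesis
  proof (rule ex1I[of _ P])
    fix p assume p: "degree p = n \<and> lead_coeff p = 1 \<and> orth n p"
    then have diff: "p - P = 0 \<or> degree (p - P) < n"
      using degree_diff_smult_monic_less[of p n P] P by auto
    have "ip (p - P) (p - P) = 0"
      using orth_ip_eq_0[OF _ diff] p P(3) by (simp add: ip_diff_left)
    then show "p = P" using wnorm2_pos[of "p - P"] by (auto simp: ip_self)
  qed (use P in auto)
qed

lemma sup_le_wnorm2:
  "\<exists>C\<ge>0. \<forall>q z. degree q < m \<longrightarrow> z \<in> sphere 0 1 \<longrightarrow> (cmod (poly q z))\<^sup>2 \<le> C * wnorm2 q"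
proof (induction m)
  case 0
  show ?case by auto
next
  case (Suc m)
  obtain C where "C \<ge> 0"
    and C: "\<And>q z. degree q < m \<Longrightarrow> z \<in> sphere 0 1 \<Longrightarrow> (cmod (poly q z))\<^sup>2 \<le> C * wnorm2 q"
    using Suc.IH by blast
  obtain P where P: "degree P = m" "lead_coeff P = 1" "orth m P" using monic_orth_ex1 by blast
  then have "wnorm2 P > 0" by (intro wnorm2_pos) auto
  obtain K where K: "\<And>z. z \<in> sphere 0 1 \<Longrightarrow> cmod (poly P z) \<le> K"
    using bounded_on_unit_circle[OF continuous_on_poly[OF continuous_on_id]] by blast
  define C' where "C' = 2 * K\<^sup>2 / wnorm2 P + 2 * C"
  have "(cmod (poly q z))\<^sup>2 \<le> C' * wnorm2 q" if "degree q < Suc m" "z \<in> sphere 0 1" for q z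
  proof -
    have "degree q \<le> m" using that(1) by simp
    then obtain b r where q_eq: "q = smult b P + r" and r: "r = 0 \<or> degree r < m"
      and wq: "wnorm2 q = (cmod b)\<^sup>2 * wnorm2 P + wnorm2 r"
      using orth_decomposition[OF P] by blast
    have Cr: "(cmod (poly r z))\<^sup>2 \<le> C * wnorm2 r" using r C[OF _ that(2)] by auto
    have "cmod (poly q z) \<le> cmod b * cmod (poly P z) + cmod (poly r z)"
      using norm_triangle_ineq[of "b * poly P z" "poly r z"] by (simp add: q_eq norm_mult)
    also have "\<dots> \<le> cmod b * K + cmod (poly r z)"
      using mult_left_mono[OF K[OF that(2)] norm_ge_zero[of b]] by simp
    finally have "cmod (poly q z) \<le> cmod b * K + cmod (poly r z)" .
    then have "(cmod (poly q z))\<^sup>2 \<le> (cmod b * K + cmod (poly r z))\<^sup>2" by (simp add: power_mono)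
    also have "\<dots> \<le> 2 * (cmod b * K)\<^sup>2 + 2 * (cmod (poly r z))\<^sup>2"
      using sum_squares_bound[of "cmod b * K" "cmod (poly r z)"] by (simp add: power2_sum)
    also have "\<dots> \<le> 2 * K\<^sup>2 / wnorm2 P * ((cmod b)\<^sup>2 * wnorm2 P) + 2 * C * wnorm2 r"
      using Cr \<open>wnorm2 P > 0\<close> by (simp add: power_mult_distrib)
    also have "\<dots> \<le> C' * wnorm2 q"
    proof -
      have "C' * wnorm2 q = 2 * K\<^sup>2 / wnorm2 P * ((cmod b)\<^sup>2 * wnorm2 P) + 2 * C * wnorm2 r
          + (2 * K\<^sup>2 / wnorm2 P * wnorm2 r + 2 * C * ((cmod b)\<^sup>2 * wnorm2 P))"
        unfolding wq C'_def by (simp add: algebra_simps)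
      moreover have "0 \<le> 2 * K\<^sup>2 / wnorm2 P * wnorm2 r + 2 * C * ((cmod b)\<^sup>2 * wnorm2 P)"
        using \<open>wnorm2 P > 0\<close> \<open>C \<ge> 0\<close> wnorm2_nonneg[of r] by simp
      ultimately show ?thesis by linarith
    qed
    finally show ?thesis .
  qed
  moreover have "C' \<ge> 0" using \<open>wnorm2 P > 0\<close> \<open>C \<ge> 0\<close> by (simp add: C'_def)
  ultimately show ?case by blast
qed

end

lemma (in weighted_circle_measure) pd_if_pos_on_infinite_support:
  assumes "open U" "infinite (msupp M \<inter> U)" "\<And>z. z \<in> U \<Longrightarrow> g z > 0"
  shows "pd_weighted_circle_measure M g"
proof unfold_locales
  fix p :: "complex poly" assume "p \<noteq> 0"
  show "wnorm2 p > 0"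
  proof (rule ccontr)
    assume "\<not> wnorm2 p > 0"
    then have "wnorm2 p = 0" using wnorm2_nonneg[of p] by simp
    then have "AE z in M. g z * (cmod (poly p z))\<^sup>2 = 0"
      unfolding wnorm2_def
      by (subst (asm) integral_nonneg_eq_0_iff_AE[OF integrable_wnorm2]) (auto simp: g_nonneg)
    then have "AE z in M. z \<in> U \<longrightarrow> poly p z = 0"
      by eventually_elim (use assms(3) in fastforce)
    then show False
      using poly_eq_0_if_AE_zero_on_infinite_support[OF sets_M assms(1,2)] \<open>p \<noteq> 0\<close> by blast
  qed
qed

locale schur_flow =
  fixes \<mu> :: "complex measure"
  assumes prob: "prob_space \<mu>" and sets_\<mu>: "sets \<mu> = sets borel"
    and null_off_circle: "emeasure \<mu> (- sphere 0 1) = 0"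
    and nontrivial: "nontrivial_measure \<mu>" and one_in_ess_supp: "1 \<in> ess_supp \<mu>"
begin

sublocale finite_circle_measure \<mu>
proof (rule finite_circle_measure.intro)
  show "finite_measure \<mu>" using prob by (rule prob_space.axioms(1))
  show "sets \<mu> = sets borel" by (rule sets_\<mu>)
  have "- sphere 0 1 \<in> sets \<mu>" using sets_\<mu> by (simp add: borel_open open_Compl)
  moreover have "{z \<in> space \<mu>. z \<notin> sphere 0 1} = - sphere 0 1"
    using sets_eq_imp_space_eq[OF sets_\<mu>] by auto
  ultimately show "AE z in \<mu>. z \<in> sphere 0 1"
    using AE_iff_measurable null_off_circle by metis
qed

definition total_weight :: "real \<Rightarrow> real" where
  "total_weight t = (\<integral>w. exp (2 * t * Re w) \<partial>\<mu>)"

definition weight :: "real \<Rightarrow> complex \<Rightarrow> real" where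
  "weight t z = exp (2 * t * Re z) / total_weight t"

lemma mu_t_eq_density: "mu_t \<mu> t = density \<mu> (\<lambda>z. ennreal (weight t z))"
  unfolding mu_t_def weight_def total_weight_def ..

lemma total_weight_pos: "total_weight t > 0"
proof -
  have "AE w in \<mu>. exp (- 2 * \<bar>t\<bar>) \<le> exp (2 * t * Re w)"
    using AE_unit_circle
  proof eventually_elim
    case (elim w)
    have "\<bar>Re w\<bar> \<le> 1" using abs_Re_le_cmod[of w] elim by simp
    then have "\<bar>t * Re w\<bar> \<le> \<bar>t\<bar>" by (simp add: abs_mult mult_left_le)
    then show ?case unfolding abs_le_iff by simp
  qed
  then have "(\<integral>w. exp (- 2 * \<bar>t\<bar>) \<partial>\<mu>) \<le> total_weight t"
    unfolding total_weight_def by (intro integral_mono_AE integrable_continuous continuous_intros)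
  moreover have "(\<integral>w. exp (- 2 * \<bar>t\<bar>) \<partial>\<mu>) = exp (- 2 * \<bar>t\<bar>)"
    using prob_space.prob_space[OF prob] by simp
  ultimately show ?thesis using exp_gt_zero[of "- 2 * \<bar>t\<bar>"] by linarith
qed

lemma weight_pos: "weight t z > 0"
  unfolding weight_def using total_weight_pos by simp

lemma continuous_on_weight: "continuous_on UNIV (weight t)"
  unfolding weight_def using total_weight_pos[of t] by (intro continuous_intros) auto

lemma pd_weight: "pd_weighted_circle_measure \<mu> (weight t)"
proof -
  interpret weighted_circle_measure \<mu> "weight t"
  proof (rule weighted_circle_measure.intro[OF finite_circle_measure_axioms], unfold_locales)
    show "weight t \<in> borel_measurable borel"
      by (rule borel_measurable_continuous_onI[OF continuous_on_weight])
    obtain K where K: "\<And>z. z \<in> sphere 0 1 \<Longrightarrow> norm (weight t z) \<le> K"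
      using bounded_on_unit_circle[OF continuous_on_weight] by blast
    have "weight t z \<le> K" if "z \<in> sphere 0 1" for z
      using K[OF that] weight_pos[of t z] by simp
    then show "\<exists>G. \<forall>z\<in>sphere 0 1. weight t z \<le> G" by blast
  qed (simp add: less_imp_le weight_pos)
  show ?thesis
    using nontrivial weight_pos
    by (intro pd_if_pos_on_infinite_support[of UNIV]) (auto simp: nontrivial_measure_def)
qed

lemma pd_indicator_ball:
  assumes "\<rho> > 0"
  shows "pd_weighted_circle_measure \<mu> (indicator (ball 1 \<rho>))"
proof -
  interpret weighted_circle_measure \<mu> "indicator (ball 1 \<rho>)"
  proof (rule weighted_circle_measure.intro[OF finite_circle_measure_axioms], unfold_locales)
    show "indicator (ball 1 \<rho>) \<in> borel_measurable borel"
      by (rule borel_measurable_indicator) (simp add: borel_open)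
    show "\<And>z. (0::real) \<le> indicator (ball 1 \<rho>) z" by simp
    show "\<exists>G. \<forall>z\<in>sphere 0 1. (indicator (ball 1 \<rho>) z :: real) \<le> G"
      by (intro exI[of _ 1]) (simp add: indicator_def)
  qed
  show ?thesis
    using one_in_ess_supp assms
    by (intro pd_if_pos_on_infinite_support[of "ball 1 \<rho>"])
      (auto simp: ess_supp_def islimpt_eq_infinite_ball)
qed

lemma OPUC_mu_t:
  "degree (OPUC (mu_t \<mu> t) n) = n \<and> lead_coeff (OPUC (mu_t \<mu> t) n) = 1 \<and>
   weighted_circle_measure.orth \<mu> (weight t) n (OPUC (mu_t \<mu> t) n)"
proof -
  interpret W: pd_weighted_circle_measure \<mu> "weight t" by (rule pd_weight)
  have "(\<integral>z. poly p z * cnj (z ^ k) \<partial>mu_t \<mu> t) = W.ip p (monom 1 k)" for p k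
  proof -
    have "(\<lambda>z. poly p z * cnj (z ^ k)) \<in> borel_measurable \<mu>"
      unfolding measurable_cong_sets[OF sets_\<mu> refl]
      by (intro borel_measurable_continuous_onI continuous_intros)
    moreover have "weight t \<in> borel_measurable \<mu>"
      unfolding measurable_cong_sets[OF sets_\<mu> refl]
      by (rule borel_measurable_continuous_onI[OF continuous_on_weight])
    moreover have "AE z in \<mu>. 0 \<le> weight t z" by (simp add: less_imp_le[OF weight_pos])
    ultimately show ?thesis
      unfolding mu_t_eq_density W.ip_def
      by (simp add: integral_density scaleR_conv_of_real poly_monom)
  qed
  then have OPUC_eq: "OPUC (mu_t \<mu> t) n = (THE p. degree p = n \<and> lead_coeff p = 1 \<and> W.orth n p)"
    unfolding OPUC_def W.orth_def by simp
  show ?thesis unfolding OPUC_eq by (rule theI'[OF W.monic_orth_ex1])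
qed

lemma weight_le_off_neighbourhood:
  assumes "t \<ge> 0" "cmod z = 1" "0 \<le> \<delta>" "\<delta> \<le> cmod (z - 1)"
  shows "weight t z \<le> exp (t * (2 - \<delta>\<^sup>2)) / total_weight t"
proof -
  have "\<delta>\<^sup>2 \<le> (cmod (z - 1))\<^sup>2" using assms(4,3) by (rule power_mono)
  then have "Re z \<le> 1 - \<delta>\<^sup>2 / 2" using Re_eq_on_unit_circle[OF assms(2)] by linarith
  then have "2 * t * Re z \<le> 2 * t * (1 - \<delta>\<^sup>2 / 2)" using assms(1) by (simp add: mult_left_mono)
  also have "\<dots> = t * (2 - \<delta>\<^sup>2)" by (simp add: algebra_simps)
  finally show ?thesis
    unfolding weight_def using total_weight_pos[of t] by (intro divide_right_mono) auto
qed

lemma weight_ge_near_one: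
  assumes "t \<ge> 0" "cmod z = 1" "cmod (z - 1) < \<rho>"
  shows "exp (t * (2 - \<rho>\<^sup>2)) / total_weight t \<le> weight t z"
proof -
  have "(cmod (z - 1))\<^sup>2 \<le> \<rho>\<^sup>2" using assms(3) by (intro power_mono) auto
  then have "1 - \<rho>\<^sup>2 / 2 \<le> Re z" using Re_eq_on_unit_circle[OF assms(2)] by linarith
  then have "2 * t * (1 - \<rho>\<^sup>2 / 2) \<le> 2 * t * Re z" using assms(1) by (simp add: mult_left_mono)
  moreover have "2 * t * (1 - \<rho>\<^sup>2 / 2) = t * (2 - \<rho>\<^sup>2)" by (simp add: algebra_simps)
  ultimately show ?thesis
    unfolding weight_def using total_weight_pos[of t] by (intro divide_right_mono) auto
qed

lemma integrable_weight_mult: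
  assumes "continuous_on UNIV f"
  shows "integrable \<mu> (\<lambda>z. weight t z * f z)"
  using assms by (intro integrable_continuous continuous_on_mult continuous_on_weight)

lemma weight_dist_le:
  assumes "t \<ge> 0" "\<delta> > 0" "cmod z = 1" "0 \<le> Q" "Q \<le> K"
  shows "weight t z * (cmod (z - 1) * Q)
    \<le> \<delta> * (weight t z * Q) + 2 * K * (exp (t * (2 - \<delta>\<^sup>2)) / total_weight t)"
proof -
  define E where "E = exp (t * (2 - \<delta>\<^sup>2)) / total_weight t"
  have "0 \<le> weight t z" "0 \<le> E" using weight_pos[of t z] total_weight_pos[of t] by (simp_all add: E_def)
  have "0 \<le> 2 * K * E" using assms(4,5) \<open>0 \<le> E\<close> by simp
  have "0 \<le> \<delta> * (weight t z * Q)" using assms(2,4) \<open>0 \<le> weight t z\<close> by simp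
  have "weight t z * (cmod (z - 1) * Q) \<le> \<delta> * (weight t z * Q) + 2 * K * E"
  proof (cases "cmod (z - 1) < \<delta>")
    case True
    have "weight t z * (cmod (z - 1) * Q) = cmod (z - 1) * (weight t z * Q)" by simp
    also have "\<dots> \<le> \<delta> * (weight t z * Q)"
      using True \<open>0 \<le> weight t z\<close> assms(4) by (intro mult_right_mono) auto
    finally show ?thesis using \<open>0 \<le> 2 * K * E\<close> by linarith
  next
    case False
    have w_le: "weight t z \<le> E"
      unfolding E_def using False assms(1-3) by (intro weight_le_off_neighbourhood) auto
    have "cmod (z - 1) \<le> 2" using norm_triangle_ineq4[of z 1] assms(3) by simp
    then have dist_le: "cmod (z - 1) * Q \<le> 2 * K" using assms(4,5) by (intro mult_mono) auto
    have "weight t z * (cmod (z - 1) * Q) \<le> E * (2 * K)"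
      using mult_mono[OF w_le dist_le \<open>0 \<le> E\<close>] assms(4) by simp
    moreover have "E * (2 * K) = 2 * K * E" by (simp add: mult_ac)
    ultimately show ?thesis using \<open>0 \<le> \<delta> * (weight t z * Q)\<close> by linarith
  qed
  then show ?thesis by (simp only: E_def)
qed

lemma integral_weight_dist_le:
  assumes "t \<ge> 0" "\<delta> > 0" "\<And>z. z \<in> sphere 0 1 \<Longrightarrow> (cmod (poly q z))\<^sup>2 \<le> K"
  shows "(\<integral>z. weight t z * (cmod (z - 1) * (cmod (poly q z))\<^sup>2) \<partial>\<mu>)
    \<le> \<delta> * (\<integral>z. weight t z * (cmod (poly q z))\<^sup>2 \<partial>\<mu>)
      + 2 * K * (exp (t * (2 - \<delta>\<^sup>2)) / total_weight t)"
proof -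
  define E where "E = exp (t * (2 - \<delta>\<^sup>2)) / total_weight t"
  define Q where "Q z = (cmod (poly q z))\<^sup>2" for z
  have "weight t z * (cmod (z - 1) * Q z) \<le> \<delta> * (weight t z * Q z) + 2 * K * E"
    if "z \<in> sphere 0 1" for z
    unfolding E_def Q_def using assms(1,2) assms(3)[OF that] that by (intro weight_dist_le) auto
  then have AE: "AE z in \<mu>.
      weight t z * (cmod (z - 1) * Q z) \<le> \<delta> * (weight t z * Q z) + 2 * K * E"
    using AE_unit_circle by (rule eventually_mono[rotated])
  have int_dist: "integrable \<mu> (\<lambda>z. weight t z * (cmod (z - 1) * Q z))"
    unfolding Q_def by (intro integrable_weight_mult continuous_intros)
  have int_Q: "integrable \<mu> (\<lambda>z. weight t z * Q z)"
    unfolding Q_def by (intro integrable_weight_mult continuous_intros)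
  have int_const: "integrable \<mu> (\<lambda>z. 2 * K * E)"
    by (rule integrable_continuous[OF continuous_on_const])
  have "(\<integral>z. weight t z * (cmod (z - 1) * Q z) \<partial>\<mu>)
      \<le> (\<integral>z. \<delta> * (weight t z * Q z) + 2 * K * E \<partial>\<mu>)"
    using int_dist Bochner_Integration.integrable_add[OF integrable_mult_right[OF int_Q] int_const] AE
    by (rule integral_mono_AE)
  also have "\<dots> = \<delta> * (\<integral>z. weight t z * Q z \<partial>\<mu>) + 2 * K * E"
    using Bochner_Integration.integral_add[OF integrable_mult_right[OF int_Q] int_const]
      prob_space.prob_space[OF prob] by simp
  finally show ?thesis by (simp only: Q_def E_def)
qed

lemma integral_weight_ge_ball:
  assumes "t \<ge> 0"
  shows "exp (t * (2 - \<rho>\<^sup>2)) / total_weight t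
      * (\<integral>z. indicator (ball 1 \<rho>) z * (cmod (poly q z))\<^sup>2 \<partial>\<mu>)
    \<le> (\<integral>z. weight t z * (cmod (poly q z))\<^sup>2 \<partial>\<mu>)"
proof -
  define E where "E = exp (t * (2 - \<rho>\<^sup>2)) / total_weight t"
  define Q where "Q z = (cmod (poly q z))\<^sup>2" for z
  have "E * (indicator (ball 1 \<rho>) z * Q z) \<le> weight t z * Q z" if z: "z \<in> sphere 0 1" for z
  proof (cases "z \<in> ball 1 \<rho>")
    case True
    then have "E \<le> weight t z"
      unfolding E_def using z assms by (intro weight_ge_near_one) (auto simp: dist_norm norm_minus_commute)
    then show ?thesis using True by (simp add: Q_def mult_right_mono)
  next
    case False
    then show ?thesis using weight_pos[of t z] by (simp add: Q_def)
  qed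
  then have AE: "AE z in \<mu>. E * (indicator (ball 1 \<rho>) z * Q z) \<le> weight t z * Q z"
    using AE_unit_circle by (rule eventually_mono[rotated])
  have "integrable \<mu> (\<lambda>z. Q z)"
    unfolding Q_def by (intro integrable_continuous continuous_intros)
  then have int_ball: "integrable \<mu> (\<lambda>z. indicator (ball 1 \<rho>) z * Q z)"
    using integrable_mult_indicator[of "ball 1 \<rho>" \<mu> "\<lambda>z. Q z"] sets_\<mu> by simp
  have int_Q: "integrable \<mu> (\<lambda>z. weight t z * Q z)"
    unfolding Q_def by (intro integrable_weight_mult continuous_intros)
  have "E * (\<integral>z. indicator (ball 1 \<rho>) z * Q z \<partial>\<mu>)
      = (\<integral>z. E * (indicator (ball 1 \<rho>) z * Q z) \<partial>\<mu>)"
    by (rule integral_mult_right_zero[symmetric])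
  also have "\<dots> \<le> (\<integral>z. weight t z * Q z \<partial>\<mu>)"
    using integrable_mult_right[OF int_ball] int_Q AE by (rule integral_mono_AE)
  finally show ?thesis by (simp only: E_def Q_def)
qed

lemma integral_weight_dist_le_concentrated:
  assumes "t \<ge> 0" "\<delta> > 0" "C \<ge> 0"
    and "\<And>z. z \<in> sphere 0 1 \<Longrightarrow>
      (cmod (poly q z))\<^sup>2 \<le> C * (\<integral>z. indicator (ball 1 \<rho>) z * (cmod (poly q z))\<^sup>2 \<partial>\<mu>)"
  shows "(\<integral>z. weight t z * (cmod (z - 1) * (cmod (poly q z))\<^sup>2) \<partial>\<mu>)
    \<le> (\<delta> + 2 * C * exp (- (\<delta>\<^sup>2 - \<rho>\<^sup>2) * t)) * (\<integral>z. weight t z * (cmod (poly q z))\<^sup>2 \<partial>\<mu>)"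
proof -
  define R where "R = (\<integral>z. weight t z * (cmod (poly q z))\<^sup>2 \<partial>\<mu>)"
  define B where "B = (\<integral>z. indicator (ball 1 \<rho>) z * (cmod (poly q z))\<^sup>2 \<partial>\<mu>)"
  have ball_le: "exp (t * (2 - \<rho>\<^sup>2)) / total_weight t * B \<le> R"
    unfolding R_def B_def by (rule integral_weight_ge_ball[OF assms(1)])
  have exp_split: "exp (t * (2 - \<delta>\<^sup>2)) = exp (- (\<delta>\<^sup>2 - \<rho>\<^sup>2) * t) * exp (t * (2 - \<rho>\<^sup>2))"
    unfolding mult_exp_exp by (simp add: algebra_simps)
  have "(\<integral>z. weight t z * (cmod (z - 1) * (cmod (poly q z))\<^sup>2) \<partial>\<mu>)
      \<le> \<delta> * R + 2 * (C * B) * (exp (t * (2 - \<delta>\<^sup>2)) / total_weight t)"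
    unfolding R_def B_def by (rule integral_weight_dist_le[OF assms(1,2,4)])
  also have "\<dots> = \<delta> * R + 2 * C * exp (- (\<delta>\<^sup>2 - \<rho>\<^sup>2) * t) *
      (exp (t * (2 - \<rho>\<^sup>2)) / total_weight t * B)"
    unfolding exp_split by (simp add: mult_ac)
  also have "\<dots> \<le> \<delta> * R + 2 * C * exp (- (\<delta>\<^sup>2 - \<rho>\<^sup>2) * t) * R"
    using mult_left_mono[OF ball_le, of "2 * C * exp (- (\<delta>\<^sup>2 - \<rho>\<^sup>2) * t)"] assms(3)
    by (simp add: add_left_mono)
  also have "\<dots> = (\<delta> + 2 * C * exp (- (\<delta>\<^sup>2 - \<rho>\<^sup>2) * t)) * R" by (simp add: algebra_simps)
  finally show ?thesis unfolding R_def .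
qed

lemma eventually_integral_weight_dist_less:
  assumes "e > 0"
  shows "\<forall>\<^sub>F t in at_top. \<forall>q. q \<noteq> 0 \<longrightarrow> degree q < n \<longrightarrow>
    (\<integral>z. weight t z * (cmod (z - 1) * (cmod (poly q z))\<^sup>2) \<partial>\<mu>)
      < e * (\<integral>z. weight t z * (cmod (poly q z))\<^sup>2 \<partial>\<mu>)"
proof -
  define \<delta> where "\<delta> = e / 2"
  define \<rho> where "\<rho> = \<delta> / 2"
  have "\<delta> > 0" "\<rho> > 0" "\<delta>\<^sup>2 - \<rho>\<^sup>2 > 0"
    using assms by (simp_all add: \<delta>_def \<rho>_def power2_eq_square)
  interpret B: pd_weighted_circle_measure \<mu> "indicator (ball 1 \<rho>)"
    using pd_indicator_ball[OF \<open>\<rho> > 0\<close>] .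
  obtain C where "C \<ge> 0" and C: "\<And>q z. degree q < n \<Longrightarrow> z \<in> sphere 0 1 \<Longrightarrow>
      (cmod (poly q z))\<^sup>2 \<le> C * B.wnorm2 q"
    using B.sup_le_wnorm2 by blast
  have "((\<lambda>t. 2 * C * exp (- (\<delta>\<^sup>2 - \<rho>\<^sup>2) * t)) \<longlongrightarrow> 2 * C * 0) at_top"
    using \<open>\<delta>\<^sup>2 - \<rho>\<^sup>2 > 0\<close>
    by (intro tendsto_mult_left filterlim_compose[OF exp_at_bot]
        filterlim_cmult_at_bot_at_top[OF filterlim_ident]) auto
  then have "\<forall>\<^sub>F t in at_top. 2 * C * exp (- (\<delta>\<^sup>2 - \<rho>\<^sup>2) * t) < \<delta>"
    using \<open>\<delta> > 0\<close> by (simp add: order_tendstoD(2))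
  then show ?thesis using eventually_ge_at_top[of 0]
  proof eventually_elim
    case (elim t)
    show ?case
    proof (intro allI impI)
      fix q :: "complex poly" assume "q \<noteq> 0" "degree q < n"
      interpret W: pd_weighted_circle_measure \<mu> "weight t" by (rule pd_weight)
      define R where "R = (\<integral>z. weight t z * (cmod (poly q z))\<^sup>2 \<partial>\<mu>)"
      have "R > 0" using W.wnorm2_pos[OF \<open>q \<noteq> 0\<close>] unfolding R_def W.wnorm2_def .
      have "(\<integral>z. weight t z * (cmod (z - 1) * (cmod (poly q z))\<^sup>2) \<partial>\<mu>)
          \<le> (\<delta> + 2 * C * exp (- (\<delta>\<^sup>2 - \<rho>\<^sup>2) * t)) * R"
        unfolding R_def using C[OF \<open>degree q < n\<close>, unfolded B.wnorm2_def]
        by (rule integral_weight_dist_le_concentrated[OF elim(2) \<open>\<delta> > 0\<close> \<open>C \<ge> 0\<close>])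
      also have "\<dots> < (\<delta> + \<delta>) * R"
        using mult_strict_right_mono[OF add_strict_left_mono[OF elim(1)] \<open>R > 0\<close>] .
      also have "\<dots> = e * R" by (simp add: \<delta>_def)
      finally show "(\<integral>z. weight t z * (cmod (z - 1) * (cmod (poly q z))\<^sup>2) \<partial>\<mu>) < e * R" .
    qed
  qed
qed

lemma eventually_OPUC_roots_near_one:
  assumes "n \<ge> 1" "e > 0"
  shows "\<forall>\<^sub>F t in at_top. \<forall>z. poly (OPUC (mu_t \<mu> t) n) z = 0 \<longrightarrow> cmod (z - 1) < e"
  using eventually_integral_weight_dist_less[OF assms(2), of n]
proof eventually_elim
  case (elim t)
  show ?case
  proof (intro allI impI)
    fix z0 assume "poly (OPUC (mu_t \<mu> t) n) z0 = 0"
    then obtain q where \<Phi>: "OPUC (mu_t \<mu> t) n = [:-z0, 1:] * q"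
      using poly_eq_0_iff_dvd by (metis dvdE)
    interpret W: pd_weighted_circle_measure \<mu> "weight t" by (rule pd_weight)
    have deg: "degree ([:-z0, 1:] * q) = n" and lead: "lead_coeff ([:-z0, 1:] * q) = 1"
      and orth: "W.orth n ([:-z0, 1:] * q)"
      using OPUC_mu_t[of t n] unfolding \<Phi> by blast+
    have "q \<noteq> 0" using lead by (intro notI) simp
    then have "degree q < n" using deg degree_mult_eq[of "[:-z0, 1:]" q] assms(1) by simp
    have "cmod (z0 - 1) * W.wnorm2 q
        \<le> (\<integral>z. weight t z * (cmod (z - 1) * (cmod (poly q z))\<^sup>2) \<partial>\<mu>)"
      by (rule W.orth_root_dist_le[OF orth \<open>degree q < n\<close>])
    also have "\<dots> < e * W.wnorm2 q"
      using elim \<open>q \<noteq> 0\<close> \<open>degree q < n\<close> unfolding W.wnorm2_def by blast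
    finally show "cmod (z0 - 1) < e"
      using mult_less_cancel_right_pos[OF W.wnorm2_pos[OF \<open>q \<noteq> 0\<close>]] by blast
  qed
qed

lemma verblunsky_mu_t_tendsto: "((\<lambda>t. verblunsky (mu_t \<mu> t) n) \<longlongrightarrow> (-1) ^ n) at_top"
proof -
  have "((\<lambda>t. poly (OPUC (mu_t \<mu> t) (Suc n)) 0) \<longlongrightarrow> (-1) ^ Suc n) at_top"
  proof (rule tendsto_poly_0_neg_one_pow)
    show "degree (OPUC (mu_t \<mu> t) (Suc n)) = Suc n" for t
      by (rule conjunct1[OF OPUC_mu_t])
    show "lead_coeff (OPUC (mu_t \<mu> t) (Suc n)) = 1" for t
      by (rule conjunct1[OF conjunct2[OF OPUC_mu_t]])
    show "\<forall>\<^sub>F t in at_top. \<forall>z. poly (OPUC (mu_t \<mu> t) (Suc n)) z = 0 \<longrightarrow> cmod (z - 1) < e"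
      if "e > 0" for e
      using that by (intro eventually_OPUC_roots_near_one) auto
  qed
  then have "((\<lambda>t. - cnj (poly (OPUC (mu_t \<mu> t) (Suc n)) 0)) \<longlongrightarrow> - cnj ((-1) ^ Suc n)) at_top"
    by (intro tendsto_intros)
  moreover have "- cnj ((-1) ^ Suc n) = ((-1) ^ n :: complex)" by simp
  ultimately show ?thesis unfolding verblunsky_def by simp
qed

end

theorem theorem4p1:
  fixes \<mu> :: "complex measure"
  assumes "prob_space \<mu>"
    and "sets \<mu> = sets borel"
    and "emeasure \<mu> (- sphere 0 1) = 0"
    and "nontrivial_measure \<mu>"
    and "1 \<in> ess_supp \<mu>"
  shows "(\<forall>n\<ge>1. \<forall>e>0. \<forall>\<^sub>F t in at_top.
            \<forall>z. poly (OPUC (mu_t \<mu> t) n) z = 0 \<longrightarrow> cmod (z - 1) < e)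
       \<and> (\<forall>n. ((\<lambda>t. verblunsky (mu_t \<mu> t) n) \<longlongrightarrow> (-1) ^ n) at_top)"
proof -
  interpret schur_flow \<mu> using assms by (rule schur_flow.intro)
  show ?thesis by (simp add: eventually_OPUC_roots_near_one verblunsky_mu_t_tendsto)
qed

end
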